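(* Let $G=(V,E,w)$ be a graph with $V\neq\emptyset$, positive vertex weights and maximum degree $\Delta\ge1$. Let $1\le\alpha\le\Delta$ and $\gamma=\lceil\sqrt{2\Delta\alpha}\,\rceil$, and suppose $G$ is a $\gamma$-stable instance of \texttt{MIS} with maximum weight independent set $I^*$. If $I'$ is an independent set of $G$ with $w(I')\ge w(I^* )/\alpha$, then $I^*\cap I'\neq\emptyset$.
   Context: \texttt{MIS}: given a graph $G=(V,E)$ with weights $w:V\to\mathbb{R}_{>0}$, find an independent set maximizing $w(I)=\sum_{u\in I}w_u$; $w(X)=\sum_{u\in X}w_u$. For $\gamma\ge1$, a $\gamma$-perturbation of $w$ is any $w'$ with $w_u\le w'_u\le\gamma w_u$ for all $u$. The instance is $\gamma$-stable if it has a unique maximum weight independent set $I^*$ and $I^*$ remains the unique maximum weight independent set under every $\gamma$-perturbation of $w$. *)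

theory Defs
  imports Complex_Main
begin

definition simple_graph :: "'a set \<Rightarrow> ('a \<times> 'a) set \<Rightarrow> bool" where
  "simple_graph V E \<longleftrightarrow> finite V \<and> E \<subseteq> V \<times> V \<and>
     (\<forall>u v. (u, v) \<in> E \<longrightarrow> (v, u) \<in> E) \<and> (\<forall>v. (v, v) \<notin> E)"

definition degree :: "('a \<times> 'a) set \<Rightarrow> 'a \<Rightarrow> nat" where
  "degree E v = card {u. (v, u) \<in> E}"

definition max_degree :: "'a set \<Rightarrow> ('a \<times> 'a) set \<Rightarrow> nat" where
  "max_degree V E = Max (degree E ` V)"

definition independent_set :: "'a set \<Rightarrow> ('a \<times> 'a) set \<Rightarrow> 'a set \<Rightarrow> bool" where
  "independent_set V E I \<longleftrightarrow> I \<subseteq> V \<and> (\<forall>u\<in>I. \<forall>v\<in>I. (u, v) \<notin> E)"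

definition wt :: "('a \<Rightarrow> real) \<Rightarrow> 'a set \<Rightarrow> real" where
  "wt w X = (\<Sum>u\<in>X. w u)"

definition max_weight_is :: "'a set \<Rightarrow> ('a \<times> 'a) set \<Rightarrow> ('a \<Rightarrow> real) \<Rightarrow> 'a set \<Rightarrow> bool" where
  "max_weight_is V E w I \<longleftrightarrow> independent_set V E I \<and>
     (\<forall>J. independent_set V E J \<longrightarrow> wt w J \<le> wt w I)"

definition unique_max_weight_is :: "'a set \<Rightarrow> ('a \<times> 'a) set \<Rightarrow> ('a \<Rightarrow> real) \<Rightarrow> 'a set \<Rightarrow> bool" where
  "unique_max_weight_is V E w I \<longleftrightarrow> max_weight_is V E w I \<and>
     (\<forall>J. max_weight_is V E w J \<longrightarrow> J = I)"

definition perturbation :: "'a set \<Rightarrow> real \<Rightarrow> ('a \<Rightarrow> real) \<Rightarrow> ('a \<Rightarrow> real) \<Rightarrow> bool" where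
  "perturbation V \<gamma> w w' \<longleftrightarrow> (\<forall>u\<in>V. w u \<le> w' u \<and> w' u \<le> \<gamma> * w u)"

definition stable_MIS :: "'a set \<Rightarrow> ('a \<times> 'a) set \<Rightarrow> ('a \<Rightarrow> real) \<Rightarrow> real \<Rightarrow> 'a set \<Rightarrow> bool" where
  "stable_MIS V E w \<gamma> I \<longleftrightarrow> unique_max_weight_is V E w I \<and>
     (\<forall>w'. perturbation V \<gamma> w w' \<longrightarrow> unique_max_weight_is V E w' I)"

end

theory Submission
  imports Defs
begin

text \<open>Scaling the weights on an independent set \<open>J\<close> disjoint from \<open>I\<^sup>*\<close> by \<open>\<gamma>\<close> is a
  \<open>\<gamma>\<close>-perturbation that leaves \<open>w(I\<^sup>*)\<close> unchanged, so stability forces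
  \<open>\<gamma> w(J) < w(I\<^sup>*)\<close>. Since \<open>\<alpha> \<le> \<lceil>\<surd>(2\<Delta>\<alpha>)\<rceil>\<close> whenever \<open>\<alpha> \<le> \<Delta>\<close>, a set with
  \<open>w(I') \<ge> w(I\<^sup>*)/\<alpha>\<close> cannot be disjoint from \<open>I\<^sup>*\<close>.\<close>

lemma wt_nonneg:
  assumes "X \<subseteq> V" and "\<forall>u\<in>V. w u \<ge> 0"
  shows "wt w X \<ge> 0"
  using assms unfolding wt_def by (intro sum_nonneg) blast

lemma perturbation_scale_on:
  assumes "1 \<le> \<gamma>" and "\<forall>u\<in>V. w u \<ge> 0"
  shows "perturbation V \<gamma> w (\<lambda>u. if u \<in> J then \<gamma> * w u else w u)"
  unfolding perturbation_def
proof
  fix u assume "u \<in> V"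
  with assms have "1 * w u \<le> \<gamma> * w u" by (intro mult_right_mono) auto
  then show "w u \<le> (if u \<in> J then \<gamma> * w u else w u) \<and>
             (if u \<in> J then \<gamma> * w u else w u) \<le> \<gamma> * w u"
    by simp
qed

lemma wt_scale_on_self: "wt (\<lambda>u. if u \<in> J then c * w u else w u) J = c * wt w J"
  unfolding wt_def by (simp add: sum_distrib_left)

lemma wt_scale_on_disjoint:
  assumes "I \<inter> J = {}"
  shows "wt (\<lambda>u. if u \<in> J then c * w u else w u) I = wt w I"
  unfolding wt_def using assms by (intro sum.cong) auto

lemma max_weight_is_nonempty:
  assumes "max_weight_is V E w I" and "simple_graph V E" and "V \<noteq> {}"
    and "\<forall>u\<in>V. w u > 0"
  shows "I \<noteq> {}"
proof
  assume empty: "I = {}"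
  obtain v where v: "v \<in> V" using assms(3) by blast
  have "(v, v) \<notin> E" using assms(2) unfolding simple_graph_def by blast
  with v have "independent_set V E {v}" unfolding independent_set_def by blast
  with assms(1) have "wt w {v} \<le> wt w I" unfolding max_weight_is_def by blast
  with empty v assms(4) show False unfolding wt_def by force
qed

lemma stable_MIS_disjoint_gap:
  assumes stable: "stable_MIS V E w \<gamma> I" and "1 \<le> \<gamma>" and "\<forall>u\<in>V. w u \<ge> 0"
    and J: "independent_set V E J" and "J \<noteq> I" and disj: "I \<inter> J = {}"
  shows "\<gamma> * wt w J < wt w I"
proof -
  define w' where "w' = (\<lambda>u. if u \<in> J then \<gamma> * w u else w u)"
  have "perturbation V \<gamma> w w'"
    unfolding w'_def using assms(2,3) by (rule perturbation_scale_on)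
  with stable have unique: "unique_max_weight_is V E w' I"
    unfolding stable_MIS_def by blast
  with \<open>J \<noteq> I\<close> have "\<not> max_weight_is V E w' J"
    unfolding unique_max_weight_is_def by blast
  with J obtain K where "independent_set V E K" and "wt w' J < wt w' K"
    unfolding max_weight_is_def by force
  moreover from unique \<open>independent_set V E K\<close> have "wt w' K \<le> wt w' I"
    unfolding unique_max_weight_is_def max_weight_is_def by blast
  ultimately have "wt w' J < wt w' I" by linarith
  then show ?thesis
    unfolding w'_def wt_scale_on_self wt_scale_on_disjoint[OF disj] .
qed

lemma stable_MIS_meets_heavy_independent_set:
  assumes stable: "stable_MIS V E w \<gamma> I" and "simple_graph V E" and "V \<noteq> {}"
    and pos: "\<forall>u\<in>V. w u > 0" and "1 \<le> \<gamma>"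
    and J: "independent_set V E J" and heavy: "wt w I \<le> \<gamma> * wt w J"
  shows "I \<inter> J \<noteq> {}"
proof
  assume disj: "I \<inter> J = {}"
  have "max_weight_is V E w I"
    using stable unfolding stable_MIS_def unique_max_weight_is_def by blast
  then have "I \<noteq> {}" using assms(2,3) pos by (rule max_weight_is_nonempty)
  with disj have "J \<noteq> I" by blast
  from pos have "\<forall>u\<in>V. w u \<ge> 0" by (simp add: less_imp_le)
  from stable_MIS_disjoint_gap[OF stable \<open>1 \<le> \<gamma>\<close> this J \<open>J \<noteq> I\<close> disj] heavy
  show False by linarith
qed

lemma le_ceiling_sqrt_double_product:
  fixes \<alpha> D :: real
  assumes "0 \<le> \<alpha>" and "\<alpha> \<le> D"
  shows "\<alpha> \<le> of_int \<lceil>sqrt (2 * D * \<alpha>)\<rceil>"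
proof -
  have "\<alpha> * \<alpha> \<le> 2 * D * \<alpha>" using assms by (simp add: mult_right_mono)
  then have "sqrt (\<alpha> * \<alpha>) \<le> sqrt (2 * D * \<alpha>)" by (rule real_sqrt_le_mono)
  with assms(1) have "\<alpha> \<le> sqrt (2 * D * \<alpha>)" by simp
  also have "\<dots> \<le> of_int \<lceil>sqrt (2 * D * \<alpha>)\<rceil>" by (rule le_of_int_ceiling)
  finally show ?thesis .
qed

theorem mainTheorem6:
  fixes V :: "'a set" and E :: "('a \<times> 'a) set" and w :: "'a \<Rightarrow> real"
    and \<alpha> :: real and Istar I' :: "'a set"
  assumes "simple_graph V E" and "V \<noteq> {}"
    and "\<forall>u\<in>V. w u > 0"
    and "max_degree V E \<ge> 1"
    and "1 \<le> \<alpha>" and "\<alpha> \<le> real (max_degree V E)"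
    and "stable_MIS V E w (of_int \<lceil>sqrt (2 * real (max_degree V E) * \<alpha>)\<rceil>) Istar"
    and "independent_set V E I'"
    and "wt w I' \<ge> wt w Istar / \<alpha>"
  shows "Istar \<inter> I' \<noteq> {}"
proof -
  define \<gamma> :: real where "\<gamma> = of_int \<lceil>sqrt (2 * real (max_degree V E) * \<alpha>)\<rceil>"
  have "\<alpha> \<le> \<gamma>"
    unfolding \<gamma>_def using assms(5,6) by (intro le_ceiling_sqrt_double_product) auto
  have "wt w I' \<ge> 0"
    using assms(3,8) unfolding independent_set_def
    by (intro wt_nonneg[of I' V]) (auto simp: less_imp_le)
  have "wt w Istar \<le> \<alpha> * wt w I'"
    using assms(5,9) by (simp add: divide_le_eq mult.commute)
  also have "\<dots> \<le> \<gamma> * wt w I'"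
    using \<open>\<alpha> \<le> \<gamma>\<close> \<open>wt w I' \<ge> 0\<close> by (rule mult_right_mono)
  finally have "wt w Istar \<le> \<gamma> * wt w I'" .
  moreover have "1 \<le> \<gamma>" using \<open>\<alpha> \<le> \<gamma>\<close> assms(5) by linarith
  ultimately show ?thesis
    using stable_MIS_meets_heavy_independent_set[OF assms(7)[folded \<gamma>_def] assms(1-3)]
      assms(8) by blast
qed

end
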